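(* Let $n\ge 1$ and let $x_1,\dots,x_n$ be distinct integers, each greater than $1$, and let $D=\{1,0,x_1,\dots,x_n\}$. Then $diam(D)=3$ if $n=1$ and $diam(D)=4$ if $n>1$.
   Context: A signed tree is a pair $(T,s)$ where $T$ is a finite tree and $s:E(T)\to\{+,-\}$. The signed degree $sdeg(v)$ of a vertex is the number of incident positive edges minus the number of incident negative edges. $(T,s)$ realizes (satisfies) a set $D$ of integers if $D=\{sdeg(v):v\in V(T)\}$. For a set $D$ containing $1$ or $-1$, $diam(D)=\min\{diam(T): \text{some signed tree }(T,s)\text{ realizes }D\}$, where $diam(T)$ is the diameter of the tree $T$. *)

theory Defs
  imports Main
begin

text \<open>Finite simple graphs with vertex set V and edge set E (edges are 2-element sets).
  Vertices are natural numbers; every finite tree is isomorphic to one of this form.\<close>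

definition is_graph :: "nat set \<Rightarrow> nat set set \<Rightarrow> bool" where
  "is_graph V E \<longleftrightarrow> finite V \<and> (\<forall>e\<in>E. e \<subseteq> V \<and> card e = 2)"

definition is_walk :: "nat set \<Rightarrow> nat set set \<Rightarrow> nat list \<Rightarrow> bool" where
  "is_walk V E ws \<longleftrightarrow> ws \<noteq> [] \<and> set ws \<subseteq> V \<and>
     (\<forall>i. Suc i < length ws \<longrightarrow> {ws ! i, ws ! Suc i} \<in> E)"

definition connected_graph :: "nat set \<Rightarrow> nat set set \<Rightarrow> bool" where
  "connected_graph V E \<longleftrightarrow>
     (\<forall>u\<in>V. \<forall>v\<in>V. \<exists>ws. is_walk V E ws \<and> hd ws = u \<and> last ws = v)"

definition is_cycle :: "nat set \<Rightarrow> nat set set \<Rightarrow> nat list \<Rightarrow> bool" where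
  "is_cycle V E cs \<longleftrightarrow> length cs \<ge> 3 \<and> distinct cs \<and> is_walk V E cs \<and> {last cs, hd cs} \<in> E"

definition is_tree :: "nat set \<Rightarrow> nat set set \<Rightarrow> bool" where
  "is_tree V E \<longleftrightarrow> is_graph V E \<and> V \<noteq> {} \<and> connected_graph V E \<and> (\<nexists>cs. is_cycle V E cs)"

definition gdist :: "nat set \<Rightarrow> nat set set \<Rightarrow> nat \<Rightarrow> nat \<Rightarrow> nat" where
  "gdist V E u v = (LEAST k. \<exists>ws. is_walk V E ws \<and> hd ws = u \<and> last ws = v \<and> length ws = Suc k)"

definition tree_diam :: "nat set \<Rightarrow> nat set set \<Rightarrow> nat" where
  "tree_diam V E = Max {gdist V E u v | u v. u \<in> V \<and> v \<in> V}"

text \<open>Signing: s e = True means the edge e is positive, False means negative.\<close>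
definition sdeg :: "nat set set \<Rightarrow> (nat set \<Rightarrow> bool) \<Rightarrow> nat \<Rightarrow> int" where
  "sdeg E s v = int (card {e\<in>E. v \<in> e \<and> s e}) - int (card {e\<in>E. v \<in> e \<and> \<not> s e})"

definition realizes :: "nat set \<Rightarrow> nat set set \<Rightarrow> (nat set \<Rightarrow> bool) \<Rightarrow> int set \<Rightarrow> bool" where
  "realizes V E s D \<longleftrightarrow> D = sdeg E s ` V"

text \<open>diam(D): minimum diameter of a signed tree realizing D (meaningful when 1 or -1 is in D).\<close>
definition diam_set :: "int set \<Rightarrow> nat" where
  "diam_set D = (LEAST d. \<exists>V E s. is_tree V E \<and> realizes V E s D \<and> tree_diam V E = d)"

end

theory Submission
  imports Defs "HOL-Library.Nat_Bijection"
begin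

(* In a tree, a walk that never immediately returns to the vertex it just left is the unique
   shortest walk between its ends. Vertices of signed degree 0 or at least 2 have two neighbours,
   so a geodesic between two such vertices u and v extends at both ends to a longer geodesic:
   the diameter is at least d(u, v) + 2. Any realization of D has a vertex of signed degree 0 and
   one of degree x_1, giving diameter at least 3; for n > 1 there is a third such vertex (degree
   x_2), and the three cannot be pairwise adjacent in a tree, giving at least 4.
   Conversely, a root of signed degree 0 with the vertices 1, ..., n hanging below it, each
   carrying pendant leaves, realizes D with every vertex within distance 2 of the root, and
   within distance 1 of the edge {0, 1} when n = 1. *)

section \<open>Walks and distances\<close>

lemma is_walk_iff:
  "is_walk V E ws \<longleftrightarrow> ws \<noteq> [] \<and> set ws \<subseteq> V \<and> successively (\<lambda>a b. {a, b} \<in> E) ws"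
  by (simp add: is_walk_def successively_conv_nth)

lemma not_is_walk_Nil [simp]: "\<not> is_walk V E []"
  by (simp add: is_walk_def)

lemma is_walk_singleton [simp]: "is_walk V E [v] \<longleftrightarrow> v \<in> V"
  by (simp add: is_walk_iff)

lemma is_walk_Cons_Cons [simp]:
  "is_walk V E (u # v # ws) \<longleftrightarrow> u \<in> V \<and> {u, v} \<in> E \<and> is_walk V E (v # ws)"
  by (auto simp: is_walk_iff)

lemma is_walk_tl: "is_walk V E ws \<Longrightarrow> tl ws \<noteq> [] \<Longrightarrow> is_walk V E (tl ws)"
  by (cases ws rule: remdups_adj.cases) auto

lemma is_walk_take: "is_walk V E ws \<Longrightarrow> 0 < k \<Longrightarrow> is_walk V E (take k ws)"
  unfolding is_walk_def by (auto dest: in_set_takeD)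

lemma is_walk_rev: "is_walk V E ws \<Longrightarrow> is_walk V E (rev ws)"
  by (auto simp: is_walk_iff insert_commute)

lemma is_walk_append:
  assumes "is_walk V E xs" "is_walk V E ys" "last xs = hd ys"
  shows "is_walk V E (xs @ tl ys)"
proof -
  obtain y ys' where "ys = y # ys'" using assms(2) unfolding is_walk_def by (cases ys) auto
  then show ?thesis
    using assms unfolding is_walk_iff successively_append_iff by (auto simp: successively_Cons)
qed

lemma append_tl_hd_last_length:
  assumes "xs \<noteq> []" "ys \<noteq> []" "last xs = hd ys"
  shows "hd (xs @ tl ys) = hd xs" "last (xs @ tl ys) = last ys"
    and "length (xs @ tl ys) = length xs + length ys - 1"
  using assms by (cases ys; simp)+

lemma is_graph_edge:
  assumes "is_graph V E" "{u, v} \<in> E"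
  shows "u \<in> V" "v \<in> V" "u \<noteq> v"
  using assms unfolding is_graph_def by (auto simp: card_2_iff)

lemma is_graph_edge_other_end:
  assumes "is_graph V E" "e \<in> E" "w \<in> e"
  obtains y where "e = {w, y}" "y \<noteq> w"
  using assms unfolding is_graph_def by (metis card_2_iff insert_commute insert_iff singleton_iff)

lemma is_walk_edge: "is_graph V E \<Longrightarrow> {u, v} \<in> E \<Longrightarrow> is_walk V E [u, v]"
  using is_graph_edge by auto

lemma is_treeD:
  assumes "is_tree V E"
  shows "is_graph V E" "connected_graph V E" "\<nexists>cs. is_cycle V E cs" "finite V"
  using assms unfolding is_tree_def is_graph_def by simp_all

lemma gdist_le_walk:
  assumes "is_walk V E ws" "hd ws = u" "last ws = v"
  shows "gdist V E u v \<le> length ws - 1"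
proof -
  have "length ws = Suc (length ws - 1)" using assms(1) unfolding is_walk_def by simp
  then show ?thesis unfolding gdist_def using assms by (intro Least_le) blast
qed

lemma shortest_walk_exists:
  assumes "connected_graph V E" "u \<in> V" "v \<in> V"
  obtains ws where "is_walk V E ws" "hd ws = u" "last ws = v" "length ws = Suc (gdist V E u v)"
proof -
  obtain ws where "is_walk V E ws" "hd ws = u" "last ws = v"
    using assms unfolding connected_graph_def by blast
  then have "\<exists>k ws. is_walk V E ws \<and> hd ws = u \<and> last ws = v \<and> length ws = Suc k"
    unfolding is_walk_def by (metis Suc_pred length_greater_0_conv)
  then have "\<exists>ws. is_walk V E ws \<and> hd ws = u \<and> last ws = v \<and> length ws = Suc (gdist V E u v)"
    unfolding gdist_def by (rule LeastI_ex)
  with that show ?thesis by blast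
qed

lemma gdist_self: "u \<in> V \<Longrightarrow> gdist V E u u = 0"
  using gdist_le_walk[of V E "[u]"] by simp

lemma gdist_edge: "is_graph V E \<Longrightarrow> {u, v} \<in> E \<Longrightarrow> gdist V E u v \<le> 1"
  using gdist_le_walk[OF is_walk_edge] by fastforce

lemma gdist_commute:
  assumes "connected_graph V E" "u \<in> V" "v \<in> V"
  shows "gdist V E u v = gdist V E v u"
proof -
  have "gdist V E a b \<le> gdist V E b a" if ab: "a \<in> V" "b \<in> V" for a b
  proof -
    obtain ws where "is_walk V E ws" "hd ws = b" "last ws = a" "length ws = Suc (gdist V E b a)"
      using shortest_walk_exists[OF assms(1) ab(2,1)] .
    then show ?thesis
      using gdist_le_walk[OF is_walk_rev] by (fastforce simp: hd_rev last_rev)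
  qed
  then show ?thesis using assms by (simp add: order_antisym)
qed

lemma gdist_triangle:
  assumes "connected_graph V E" "u \<in> V" "v \<in> V" "w \<in> V"
  shows "gdist V E u w \<le> gdist V E u v + gdist V E v w"
proof -
  obtain xs where xs: "is_walk V E xs" "hd xs = u" "last xs = v" "length xs = Suc (gdist V E u v)"
    using shortest_walk_exists[OF assms(1-3)] .
  obtain ys where ys: "is_walk V E ys" "hd ys = v" "last ys = w" "length ys = Suc (gdist V E v w)"
    using shortest_walk_exists[OF assms(1,3,4)] .
  have "xs \<noteq> []" "ys \<noteq> []" using xs ys by auto
  then show ?thesis
    using gdist_le_walk[OF is_walk_append[OF xs(1) ys(1)]] xs ys by (simp add: append_tl_hd_last_length)
qed

lemma gdist_eq_0_imp_eq:
  assumes "connected_graph V E" "u \<in> V" "v \<in> V" "gdist V E u v = 0"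
  shows "u = v"
proof -
  obtain ws where "is_walk V E ws" "hd ws = u" "last ws = v" "length ws = Suc 0"
    using shortest_walk_exists[OF assms(1-3)] unfolding assms(4) .
  then show ?thesis by (cases ws) auto
qed

lemma gdist_eq_1_imp_edge:
  assumes "connected_graph V E" "u \<in> V" "v \<in> V" "gdist V E u v = 1"
  shows "{u, v} \<in> E"
proof -
  obtain ws where "is_walk V E ws" "hd ws = u" "last ws = v" "length ws = Suc 1"
    using shortest_walk_exists[OF assms(1-3)] unfolding assms(4) .
  then show ?thesis by (cases ws rule: remdups_adj.cases) auto
qed

lemma gdist_le_tree_diam: "finite V \<Longrightarrow> u \<in> V \<Longrightarrow> v \<in> V \<Longrightarrow> gdist V E u v \<le> tree_diam V E"
  unfolding tree_diam_def by (rule Max_ge) (auto intro: finite_image_set2)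

lemma tree_diam_le:
  assumes "finite V" "V \<noteq> {}" "\<And>u v. u \<in> V \<Longrightarrow> v \<in> V \<Longrightarrow> gdist V E u v \<le> k"
  shows "tree_diam V E \<le> k"
proof -
  have "{gdist V E u v | u v. u \<in> V \<and> v \<in> V} = (\<lambda>(u, v). gdist V E u v) ` (V \<times> V)"
    by auto
  then show ?thesis unfolding tree_diam_def using assms by (auto intro!: Max.boundedI)
qed

section \<open>Walks without backtracking\<close>

fun no_backtrack :: "'a list \<Rightarrow> bool" where
  "no_backtrack (a # b # c # xs) \<longleftrightarrow> a \<noteq> c \<and> no_backtrack (b # c # xs)"
| "no_backtrack _ \<longleftrightarrow> True"

lemma no_backtrack_Cons: "no_backtrack (a # xs) \<Longrightarrow> no_backtrack xs"
  by (cases xs rule: no_backtrack.cases) auto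

lemma no_backtrack_iff: "no_backtrack xs \<longleftrightarrow> (\<nexists>ys a b zs. xs = ys @ a # b # a # zs)"
proof
  show "\<nexists>ys a b zs. xs = ys @ a # b # a # zs" if "no_backtrack xs"
  proof (intro notI, elim exE)
    fix ys a b zs assume "xs = ys @ a # b # a # zs"
    with that show False by (induction ys arbitrary: xs) (auto dest: no_backtrack_Cons)
  qed
  show "no_backtrack xs" if "\<nexists>ys a b zs. xs = ys @ a # b # a # zs"
    using that
  proof (induction xs rule: no_backtrack.induct)
    case (1 a b c xs)
    have "a \<noteq> c" using "1.prems" by (metis append_Nil)
    moreover have "\<nexists>ys a' b' zs. b # c # xs = ys @ a' # b' # a' # zs"
    proof (intro notI, elim exE)
      fix ys a' b' zs assume "b # c # xs = ys @ a' # b' # a' # zs"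
      then have "a # b # c # xs = (a # ys) @ a' # b' # a' # zs" by simp
      then show False using "1.prems" by blast
    qed
    ultimately show ?case using "1.IH" by simp
  qed auto
qed

lemma no_backtrack_rev [simp]: "no_backtrack (rev xs) \<longleftrightarrow> no_backtrack xs"
proof -
  have backtrack_rev: "\<exists>ys' a b zs'. rev ws = ys' @ a # b # a # zs'"
    if "ws = ys @ a # b # a # zs" for ws ys zs :: "'a list" and a b
    using that by (intro exI[of _ "rev zs"] exI[of _ a] exI[of _ b] exI[of _ "rev ys"]) simp
  show ?thesis
    unfolding no_backtrack_iff by (metis backtrack_rev rev_rev_ident)
qed

lemma no_backtrack_append:
  "no_backtrack (xs @ [a, b]) \<Longrightarrow> no_backtrack (a # b # ys) \<Longrightarrow> no_backtrack (xs @ a # b # ys)"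
proof (induction xs rule: induct_list012)
  case (3 x y zs)
  then show ?case by (cases zs) auto
qed auto

lemma shortest_walk_no_backtrack:
  assumes "is_walk V E ws" "hd ws = u" "last ws = v" "length ws = Suc (gdist V E u v)"
  shows "no_backtrack ws"
proof (rule ccontr)
  assume "\<not> no_backtrack ws"
  then obtain ys a b zs where ws: "ws = ys @ a # b # a # zs" unfolding no_backtrack_iff by blast
  let ?shortcut = "ys @ a # zs"
  have "is_walk V E ?shortcut"
    using assms(1) unfolding ws is_walk_iff successively_append_iff by (auto simp: successively_Cons)
  moreover have "hd ?shortcut = u" "last ?shortcut = v"
    using assms(2,3) unfolding ws by (cases ys; cases zs; simp)+
  ultimately have "gdist V E u v \<le> length ?shortcut - 1" by (rule gdist_le_walk)
  then show False using assms(4) unfolding ws by simp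
qed

lemma distinct_last_eq_hd: "distinct xs \<Longrightarrow> last xs = hd xs \<Longrightarrow> length xs \<le> 1"
  by (cases xs) (auto dest!: last_in_set split: if_splits)

lemma no_backtrack_walk_distinct:
  assumes "is_graph V E" "\<nexists>cs. is_cycle V E cs" "is_walk V E ws" "no_backtrack ws"
  shows "distinct ws"
  using assms(3,4)
proof (induction ws)
  case (Cons a ys)
  show ?case
  proof (cases "ys = []")
    case False
    have "distinct ys" using Cons False by (metis is_walk_tl list.sel(3) no_backtrack_Cons)
    moreover have "a \<notin> set ys"
    proof
      assume "a \<in> set ys"
      then obtain k where k: "k < length ys" "ys ! k = a" by (meson in_set_conv_nth)
      consider "k = 0" | "k = 1" | "k \<ge> 2" by linarith
      then show False
      proof cases
        case 1
        then show False using Cons.prems(1) k is_graph_edge(3)[OF assms(1), of a a] by (cases ys) auto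
      next
        case 2
        then show False using Cons.prems(2) k by (cases ys rule: remdups_adj.cases) auto
      next
        case 3
        let ?cs = "a # take k ys"
        have "is_walk V E ?cs" using is_walk_take[OF Cons.prems(1), of "Suc k"] by simp
        moreover have "length ?cs \<ge> 3" using 3 k by simp
        moreover have "distinct ?cs"
          using \<open>distinct ys\<close> k by (auto simp: in_set_conv_nth nth_eq_iff_index_eq)
        moreover have "{last ?cs, hd ?cs} \<in> E"
          using Cons.prems(1) 3 k unfolding is_walk_def
          by (auto simp: last_conv_nth nth_Cons' split: if_splits)
        ultimately show False using assms(2) unfolding is_cycle_def by blast
      qed
    qed
    ultimately show ?thesis by simp
  qed simp
qed simp

lemma no_backtrack_walks_same_second_vertex:
  assumes graph: "is_graph V E" and acyclic: "\<nexists>cs. is_cycle V E cs"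
    and ps: "is_walk V E (u # p # ps)" "no_backtrack (u # p # ps)"
    and ws: "is_walk V E (u # w # ws)" "no_backtrack (u # w # ws)"
    and "last (u # p # ps) = last (u # w # ws)"
  shows "p = w"
proof (rule ccontr)
  assume "p \<noteq> w"
  \<comment> \<open>Going back along the second walk and then forward along the first one is a closed walk
    without backtracking.\<close>
  let ?closed = "rev ws @ w # u # p # ps"
  have "?closed = rev (u # w # ws) @ tl (u # p # ps)" by simp
  then have "is_walk V E ?closed"
    using is_walk_append[OF is_walk_rev[OF ws(1)] ps(1)] by (simp add: last_rev)
  moreover have "no_backtrack ?closed"
  proof (rule no_backtrack_append)
    show "no_backtrack (rev ws @ [w, u])" using no_backtrack_rev[of "u # w # ws"] ws(2) by simp
    show "no_backtrack (w # u # p # ps)" using ps(2) \<open>p \<noteq> w\<close> by simp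
  qed
  ultimately have "distinct ?closed" by (rule no_backtrack_walk_distinct[OF graph acyclic])
  moreover have "last ?closed = hd ?closed"
    using assms(7) by (simp add: hd_append hd_rev)
  ultimately show False using distinct_last_eq_hd[of ?closed] by simp
qed

lemma no_backtrack_walk_unique:
  assumes graph: "is_graph V E" and acyclic: "\<nexists>cs. is_cycle V E cs"
    and "is_walk V E ps" "no_backtrack ps" "is_walk V E ws" "no_backtrack ws"
    and "hd ps = hd ws" "last ps = last ws"
  shows "ps = ws"
  using assms(3-)
proof (induction ps arbitrary: ws)
  case (Cons u ps')
  have "ws \<noteq> []" using Cons.prems(3) by auto
  then obtain ws' where ws: "ws = u # ws'" using Cons.prems(5) by (metis hd_Cons_tl list.sel(1))
  consider "ps' = []" | "ws' = []" | p ps'' w ws'' where "ps' = p # ps''" "ws' = w # ws''"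
    by (meson neq_Nil_conv)
  then show ?case
  proof cases
    case 1
    then have "last ws = hd ws" using Cons.prems(5,6) by simp
    then have "length ws \<le> 1"
      using distinct_last_eq_hd no_backtrack_walk_distinct[OF graph acyclic Cons.prems(3,4)] by blast
    then show ?thesis using 1 ws by simp
  next
    case 2
    then have "last (u # ps') = hd (u # ps')" using Cons.prems(6) ws by simp
    then have "length (u # ps') \<le> 1"
      using distinct_last_eq_hd no_backtrack_walk_distinct[OF graph acyclic Cons.prems(1,2)] by blast
    then show ?thesis using 2 ws by simp
  next
    case (3 p ps'' w ws'')
    have "p = w"
      using no_backtrack_walks_same_second_vertex[OF graph acyclic] Cons.prems ws 3 by simp
    have "ps' = ws'"
    proof (rule Cons.IH)
      show "is_walk V E ps'" using is_walk_tl[OF Cons.prems(1)] 3 by simp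
      show "is_walk V E ws'" using is_walk_tl[OF Cons.prems(3)] ws 3 by simp
      show "no_backtrack ps'" using Cons.prems(2) by (rule no_backtrack_Cons)
      show "no_backtrack ws'" using Cons.prems(4) unfolding ws by (rule no_backtrack_Cons)
      show "hd ps' = hd ws'" "last ps' = last ws'" using Cons.prems(6) ws 3 \<open>p = w\<close> by simp_all
    qed
    then show ?thesis using ws by simp
  qed
qed simp

lemma gdist_no_backtrack_walk:
  assumes tree: "is_tree V E" and "is_walk V E ws" "no_backtrack ws"
  shows "gdist V E (hd ws) (last ws) = length ws - 1"
proof -
  have "hd ws \<in> V" "last ws \<in> V" using assms(2) unfolding is_walk_def by auto
  then obtain ps where ps: "is_walk V E ps" "hd ps = hd ws" "last ps = last ws"
      "length ps = Suc (gdist V E (hd ws) (last ws))"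
    using shortest_walk_exists[OF is_treeD(2)[OF tree]] by blast
  have "ps = ws"
    using no_backtrack_walk_unique[OF is_treeD(1,3)[OF tree] ps(1) shortest_walk_no_backtrack[OF ps]]
      assms(2,3) ps(2,3) by blast
  then show ?thesis using ps(4) by simp
qed

section \<open>Lower bounds for the diameter\<close>

definition two_neighbours :: "nat set set \<Rightarrow> nat \<Rightarrow> bool" where
  "two_neighbours E w \<longleftrightarrow> (\<exists>a b. a \<noteq> b \<and> {w, a} \<in> E \<and> {w, b} \<in> E)"

lemma gdist_add_2_le_tree_diam:
  assumes tree: "is_tree V E" and uv: "u \<in> V" "v \<in> V" "u \<noteq> v"
    and "two_neighbours E u" "two_neighbours E v"
  shows "gdist V E u v + 2 \<le> tree_diam V E"
proof -
  note graph = is_treeD(1)[OF tree] and connected = is_treeD(2)[OF tree]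
  obtain ws where ws: "is_walk V E ws" "hd ws = u" "last ws = v" "length ws = Suc (gdist V E u v)"
    using shortest_walk_exists[OF connected uv(1,2)] .
  have no_backtrack: "no_backtrack ws" using shortest_walk_no_backtrack[OF ws] .
  obtain w ws' where ws_start: "ws = u # w # ws'"
    using ws uv(3) by (cases ws rule: remdups_adj.cases) auto
  obtain z zs where ws_end: "ws = zs @ [z, v]"
    using ws uv(3) by (cases "rev ws" rule: remdups_adj.cases) (auto simp: last_rev hd_rev)
  obtain u' where u': "{u, u'} \<in> E" "u' \<noteq> w"
    using \<open>two_neighbours E u\<close> unfolding two_neighbours_def by blast
  obtain v' where v': "{v, v'} \<in> E" "v' \<noteq> z"
    using \<open>two_neighbours E v\<close> unfolding two_neighbours_def by blast
  let ?ext = "u' # ws @ [v']"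
  have "is_walk V E (ws @ [v'])"
    using is_walk_append[OF ws(1) is_walk_edge[OF graph v'(1)]] ws(3) by simp
  then have walk: "is_walk V E ?ext"
    using ws_start u' is_graph_edge[OF graph u'(1)] by (simp add: insert_commute)
  have "no_backtrack (ws @ [v'])"
    using no_backtrack_append[of zs z v "[v']"] no_backtrack v'(2) ws_end by simp
  then have "no_backtrack ?ext" using ws_start u'(2) by simp
  then have "gdist V E u' v' = length ?ext - 1"
    using gdist_no_backtrack_walk[OF tree walk] by simp
  moreover have "gdist V E u' v' \<le> tree_diam V E"
    using gdist_le_tree_diam[OF is_treeD(4)[OF tree]] is_graph_edge[OF graph] u'(1) v'(1) by blast
  ultimately show ?thesis using ws(4) by simp
qed

lemma three_le_tree_diam:
  assumes "is_tree V E" "u \<in> V" "v \<in> V" "u \<noteq> v" "two_neighbours E u" "two_neighbours E v"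
  shows "3 \<le> tree_diam V E"
proof -
  have "gdist V E u v \<noteq> 0"
    using gdist_eq_0_imp_eq[OF is_treeD(2)] assms(1-4) by blast
  then show ?thesis using gdist_add_2_le_tree_diam[OF assms] by linarith
qed

lemma four_le_tree_diam:
  assumes tree: "is_tree V E" and abc: "a \<in> V" "b \<in> V" "c \<in> V" "a \<noteq> b" "a \<noteq> c" "b \<noteq> c"
    and "two_neighbours E a" "two_neighbours E b" "two_neighbours E c"
  shows "4 \<le> tree_diam V E"
proof -
  note connected = is_treeD(2)[OF tree] and acyclic = is_treeD(3)[OF tree]
  have positive: "gdist V E a b \<noteq> 0" "gdist V E b c \<noteq> 0" "gdist V E a c \<noteq> 0"
    using gdist_eq_0_imp_eq[OF connected] abc by blast+
  have "\<not> (gdist V E a b = 1 \<and> gdist V E b c = 1 \<and> gdist V E a c = 1)"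
  proof
    assume "gdist V E a b = 1 \<and> gdist V E b c = 1 \<and> gdist V E a c = 1"
    then have "{a, b} \<in> E" "{b, c} \<in> E" "{a, c} \<in> E"
      using gdist_eq_1_imp_edge[OF connected] abc by blast+
    then have "is_cycle V E [a, b, c]"
      using abc unfolding is_cycle_def by (simp add: insert_commute)
    then show False using acyclic by blast
  qed
  then have "2 \<le> gdist V E a b \<or> 2 \<le> gdist V E b c \<or> 2 \<le> gdist V E a c"
    using positive by linarith
  then show ?thesis
  proof (elim disjE)
    assume "2 \<le> gdist V E a b"
    then show ?thesis using gdist_add_2_le_tree_diam[OF tree abc(1,2,4) assms(8,9)] by linarith
  next
    assume "2 \<le> gdist V E b c"
    then show ?thesis using gdist_add_2_le_tree_diam[OF tree abc(2,3,6) assms(9,10)] by linarith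
  next
    assume "2 \<le> gdist V E a c"
    then show ?thesis using gdist_add_2_le_tree_diam[OF tree abc(1,3,5) assms(8,10)] by linarith
  qed
qed

lemma is_graph_finite_edges: "is_graph V E \<Longrightarrow> finite E"
  unfolding is_graph_def by (metis Pow_iff finite_Pow_iff finite_subset subsetI)

lemma two_neighbours_if_two_incident_edges:
  assumes "is_graph V E" "e1 \<in> E" "e2 \<in> E" "w \<in> e1" "w \<in> e2" "e1 \<noteq> e2"
  shows "two_neighbours E w"
proof -
  obtain a where "e1 = {w, a}" using is_graph_edge_other_end[OF assms(1,2,4)] .
  moreover obtain b where "e2 = {w, b}" using is_graph_edge_other_end[OF assms(1,3,5)] .
  ultimately show ?thesis unfolding two_neighbours_def using assms(2,3,6) by blast
qed

lemma two_neighbours_if_sdeg_ge_2: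
  assumes graph: "is_graph V E" and "2 \<le> sdeg E s w"
  shows "two_neighbours E w"
proof -
  let ?pos = "{e \<in> E. w \<in> e \<and> s e}"
  have "finite ?pos" using is_graph_finite_edges[OF graph] by simp
  moreover have "\<not> card ?pos \<le> Suc 0" using assms(2) unfolding sdeg_def by linarith
  ultimately obtain e1 e2 where "e1 \<in> ?pos" "e2 \<in> ?pos" "e1 \<noteq> e2"
    using card_le_Suc0_iff_eq by blast
  then show ?thesis using two_neighbours_if_two_incident_edges[OF graph] by blast
qed

lemma two_neighbours_if_sdeg_0:
  assumes graph: "is_graph V E" and connected: "connected_graph V E"
    and "w \<in> V" "v \<in> V" "v \<noteq> w" and "sdeg E s w = 0"
  shows "two_neighbours E w"
proof -
  let ?pos = "{e \<in> E. w \<in> e \<and> s e}" and ?neg = "{e \<in> E. w \<in> e \<and> \<not> s e}"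
  obtain ws where ws: "is_walk V E ws" "hd ws = w" "last ws = v"
    using connected assms(3,4) unfolding connected_graph_def by blast
  then obtain y where "{w, y} \<in> E"
    using assms(5) by (cases ws rule: remdups_adj.cases) auto
  then have "?pos \<noteq> {} \<or> ?neg \<noteq> {}" by blast
  moreover have "card ?pos = card ?neg" using assms(6) unfolding sdeg_def by linarith
  moreover have "finite ?pos" "finite ?neg" using is_graph_finite_edges[OF graph] by auto
  ultimately have "?pos \<noteq> {}" "?neg \<noteq> {}" by (metis card_0_eq)+
  then obtain e1 e2 where "e1 \<in> ?pos" "e2 \<in> ?neg" by blast
  then show ?thesis using two_neighbours_if_two_incident_edges[OF graph] by blast
qed

section \<open>Trees given by a decreasing parent function\<close>

lemma cycle_two_neighbours:
  assumes cycle: "is_cycle V E cs" and "x \<in> set cs"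
  obtains a b where "a \<in> set cs" "b \<in> set cs" "a \<noteq> b" "{x, a} \<in> E" "{x, b} \<in> E"
proof -
  let ?L = "length cs"
  have L: "3 \<le> ?L" and "distinct cs" using cycle unfolding is_cycle_def by simp_all
  have step: "{cs ! j, cs ! Suc j} \<in> E" if "Suc j < ?L" for j
    using cycle that unfolding is_cycle_def is_walk_def by blast
  have "cs \<noteq> []" using L by auto
  then have close: "{cs ! (?L - 1), cs ! 0} \<in> E"
    using cycle unfolding is_cycle_def by (simp add: hd_conv_nth last_conv_nth)
  obtain i where i: "i < ?L" "cs ! i = x" using \<open>x \<in> set cs\<close> by (meson in_set_conv_nth)
  define succ where "succ = (if Suc i = ?L then 0 else Suc i)"
  define pred where "pred = (if i = 0 then ?L - 1 else i - 1)"
  have "succ < ?L" "pred < ?L" "succ \<noteq> pred" using i L unfolding succ_def pred_def by auto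
  moreover have "{x, cs ! succ} \<in> E"
  proof (cases "Suc i = ?L")
    case True
    then have "succ = 0" "i = ?L - 1" unfolding succ_def by simp_all
    then show ?thesis using close i(2) by (simp add: insert_commute)
  qed (use step[of i] i in \<open>simp add: succ_def\<close>)
  moreover have "{x, cs ! pred} \<in> E"
    using step[of "i - 1"] close i L unfolding pred_def by (auto simp: insert_commute)
  ultimately show ?thesis
    using that \<open>distinct cs\<close> by (metis nth_eq_iff_index_eq nth_mem)
qed

definition parent_edges :: "nat set \<Rightarrow> nat \<Rightarrow> (nat \<Rightarrow> nat) \<Rightarrow> nat set set" where
  "parent_edges V r p = (\<lambda>v. {v, p v}) ` (V - {r})"

locale parent_tree =
  fixes V :: "nat set" and r :: nat and p :: "nat \<Rightarrow> nat"
  assumes finite_vertices: "finite V" and root_in: "r \<in> V"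
    and parent_in: "\<And>v. v \<in> V - {r} \<Longrightarrow> p v \<in> V"
    and parent_less: "\<And>v. v \<in> V - {r} \<Longrightarrow> p v < v"
begin

abbreviation edges :: "nat set set" where "edges \<equiv> parent_edges V r p"

lemma parent_edge: "v \<in> V - {r} \<Longrightarrow> {v, p v} \<in> edges"
  unfolding parent_edges_def by blast

lemma edge_to_smaller_is_parent:
  assumes "{m, y} \<in> edges" "y < m"
  shows "y = p m"
proof -
  obtain v where v: "v \<in> V - {r}" "{m, y} = {v, p v}"
    using assms(1) unfolding parent_edges_def by blast
  then show ?thesis using parent_less[OF v(1)] assms(2) by (auto simp: doubleton_eq_iff)
qed

lemma is_graph: "is_graph V edges"
  unfolding is_graph_def parent_edges_def
  using finite_vertices parent_in parent_less by fastforce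

lemma walk_to_root: "v \<in> V \<Longrightarrow> \<exists>ws. is_walk V edges ws \<and> hd ws = v \<and> last ws = r"
proof (induction v rule: less_induct)
  case (less v)
  show ?case
  proof (cases "v = r")
    case True
    then show ?thesis using root_in by (intro exI[of _ "[r]"]) simp
  next
    case False
    then have v: "v \<in> V - {r}" using less.prems by simp
    then obtain ws where ws: "is_walk V edges ws" "hd ws = p v" "last ws = r"
      using less.IH parent_in parent_less by blast
    then have "is_walk V edges (v # ws)"
      using parent_edge[OF v] less.prems by (cases ws) auto
    then show ?thesis using ws by (intro exI[of _ "v # ws"]) (auto simp: is_walk_def)
  qed
qed

lemma connected: "connected_graph V edges"
  unfolding connected_graph_def
proof (intro ballI)
  fix u v assume "u \<in> V" "v \<in> V"
  then obtain us vs where us: "is_walk V edges us" "hd us = u" "last us = r"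
    and vs: "is_walk V edges vs" "hd vs = v" "last vs = r"
    using walk_to_root by metis
  have "is_walk V edges (us @ tl (rev vs))"
    using is_walk_append[OF us(1) is_walk_rev[OF vs(1)]] us vs by (simp add: hd_rev)
  moreover have "us \<noteq> []" "rev vs \<noteq> []" using us vs by auto
  ultimately show "\<exists>ws. is_walk V edges ws \<and> hd ws = u \<and> last ws = v"
    using us vs by (intro exI[of _ "us @ tl (rev vs)"]) (simp add: append_tl_hd_last_length hd_rev last_rev)
qed

text \<open>On a cycle, the largest vertex would have two different smaller neighbours,
  but only its parent is a smaller neighbour.\<close>
lemma acyclic: "\<nexists>cs. is_cycle V edges cs"
proof
  assume "\<exists>cs. is_cycle V edges cs"
  then obtain cs where cycle: "is_cycle V edges cs" by blast
  define m where "m = Max (set cs)"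
  have "cs \<noteq> []" using cycle unfolding is_cycle_def by auto
  then have "m \<in> set cs" unfolding m_def by simp
  then obtain a b where ab: "a \<in> set cs" "b \<in> set cs" "a \<noteq> b" "{m, a} \<in> edges" "{m, b} \<in> edges"
    using cycle_two_neighbours[OF cycle] by blast
  have "a \<le> m" "b \<le> m" unfolding m_def using ab(1,2) by simp_all
  moreover have "a \<noteq> m" "b \<noteq> m" using is_graph_edge(3)[OF is_graph] ab(4,5) by blast+
  ultimately have "a = p m" "b = p m"
    using edge_to_smaller_is_parent[OF ab(4)] edge_to_smaller_is_parent[OF ab(5)] by simp_all
  then show False using ab(3) by simp
qed

lemma is_tree: "is_tree V edges"
  unfolding is_tree_def using is_graph connected acyclic root_in by blast

lemma card_incident_edges:
  "card {e \<in> edges. w \<in> e \<and> P e} = card {v \<in> V - {r}. (v = w \<or> p v = w) \<and> P {v, p v}}"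
proof -
  let ?children = "{v \<in> V - {r}. (v = w \<or> p v = w) \<and> P {v, p v}}"
  have "inj_on (\<lambda>v. {v, p v}) (V - {r})"
  proof
    fix a b assume ab: "a \<in> V - {r}" "b \<in> V - {r}" "{a, p a} = {b, p b}"
    then show "a = b" using parent_less[OF ab(1)] parent_less[OF ab(2)] by (auto simp: doubleton_eq_iff)
  qed
  then have "inj_on (\<lambda>v. {v, p v}) ?children" by (rule inj_on_subset) blast
  moreover have "{e \<in> edges. w \<in> e \<and> P e} = (\<lambda>v. {v, p v}) ` ?children"
    unfolding parent_edges_def by blast
  ultimately show ?thesis by (simp add: card_image)
qed

lemma sdeg_eq:
  "sdeg edges s w = int (card {v \<in> V - {r}. (v = w \<or> p v = w) \<and> s {v, p v}})
              - int (card {v \<in> V - {r}. (v = w \<or> p v = w) \<and> \<not> s {v, p v}})"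
  unfolding sdeg_def card_incident_edges ..

end

section \<open>A realizing tree of small diameter\<close>

text \<open>The root 0 has negative edges to 1, ..., n and positive edges to the leaves n+1, ..., 2n;
  each i in 1, ..., n has nat (x i) + 1 positive pendant edges, to the leaves witness_leaf n i j.
  So the signed degrees are 0 at the root, x i at i, and 1 at every leaf.\<close>

definition witness_leaf :: "nat \<Rightarrow> nat \<Rightarrow> nat \<Rightarrow> nat" where
  "witness_leaf n i j = 2 * n + 1 + prod_encode (i, j)"

definition witness_vertices :: "nat \<Rightarrow> (nat \<Rightarrow> int) \<Rightarrow> nat set" where
  "witness_vertices n x = {0..2 * n} \<union> {witness_leaf n i j | i j. i \<in> {1..n} \<and> j \<le> nat (x i)}"

definition witness_parent :: "nat \<Rightarrow> nat \<Rightarrow> nat" where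
  "witness_parent n v = (if v \<le> 2 * n then 0 else fst (prod_decode (v - (2 * n + 1))))"

definition witness_edges :: "nat \<Rightarrow> (nat \<Rightarrow> int) \<Rightarrow> nat set set" where
  "witness_edges n x = parent_edges (witness_vertices n x) 0 (witness_parent n)"

definition witness_sign :: "nat \<Rightarrow> nat set \<Rightarrow> bool" where
  "witness_sign n e \<longleftrightarrow> (\<forall>i\<in>{1..n}. e \<noteq> {0, i})"

lemma witness_parent_leaf [simp]: "witness_parent n (witness_leaf n i j) = i"
  unfolding witness_parent_def witness_leaf_def by simp

lemma witness_leaf_not_le [simp]: "\<not> witness_leaf n i j \<le> 2 * n"
  unfolding witness_leaf_def by simp

lemma witness_parent_small: "v \<le> 2 * n \<Longrightarrow> witness_parent n v = 0"
  unfolding witness_parent_def by simp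

lemma witness_vertices_cases:
  assumes "v \<in> witness_vertices n x"
  obtains "v \<le> 2 * n" | i j where "i \<in> {1..n}" "j \<le> nat (x i)" "v = witness_leaf n i j"
  using assms unfolding witness_vertices_def by auto

lemma witness_parent_le: "v \<in> witness_vertices n x \<Longrightarrow> witness_parent n v \<le> n"
  by (erule witness_vertices_cases) (auto simp: witness_parent_small)

lemma witness_parent_tree: "parent_tree (witness_vertices n x) 0 (witness_parent n)"
proof
  let ?leaves = "(\<lambda>(i, j). witness_leaf n i j) ` ({1..n} \<times> {..Max (nat ` x ` {1..n})})"
  have "{witness_leaf n i j | i j. i \<in> {1..n} \<and> j \<le> nat (x i)} \<subseteq> ?leaves"
  proof clarify
    fix i j assume ij: "i \<in> {1..n}" "j \<le> nat (x i)"
    have "nat (x i) \<le> Max (nat ` x ` {1..n})" using ij(1) by simp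
    then have "j \<le> Max (nat ` x ` {1..n})" using ij(2) by linarith
    then show "witness_leaf n i j \<in> ?leaves" using ij(1) by (intro image_eqI[of _ _ "(i, j)"]) auto
  qed
  moreover have "finite ?leaves" by simp
  ultimately show "finite (witness_vertices n x)"
    unfolding witness_vertices_def by (meson finite_Un finite_atLeastAtMost finite_subset)
  show "0 \<in> witness_vertices n x" unfolding witness_vertices_def by simp
  have parent: "witness_parent n v \<in> witness_vertices n x \<and> witness_parent n v < v"
    if v: "v \<in> witness_vertices n x - {0}" for v
    using DiffD1[OF v]
  proof (cases rule: witness_vertices_cases)
    case 1
    then show ?thesis using v by (auto simp: witness_parent_small witness_vertices_def)
  next
    case (2 i j)
    have "i \<le> prod_encode (i, j)" by (rule le_prod_encode_1)
    then have "i < v" using 2 by (simp add: witness_leaf_def)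
    moreover have "i \<in> witness_vertices n x" using 2 by (simp add: witness_vertices_def)
    ultimately show ?thesis using 2 by simp
  qed
  show "witness_parent n v \<in> witness_vertices n x" if "v \<in> witness_vertices n x - {0}" for v
    using parent[OF that] ..
  show "witness_parent n v < v" if "v \<in> witness_vertices n x - {0}" for v
    using parent[OF that] ..
qed

lemma witness_is_tree: "is_tree (witness_vertices n x) (witness_edges n x)"
  unfolding witness_edges_def by (rule parent_tree.is_tree[OF witness_parent_tree])

lemma witness_parent_eq_0_iff: "v \<in> witness_vertices n x \<Longrightarrow> witness_parent n v = 0 \<longleftrightarrow> v \<le> 2 * n"
  by (erule witness_vertices_cases) (auto simp: witness_parent_small)

lemma witness_sign_parent_edge:
  assumes "v \<in> witness_vertices n x - {0}"
  shows "witness_sign n {v, witness_parent n v} \<longleftrightarrow> n < v"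
proof (cases "v \<le> 2 * n")
  case True
  then show ?thesis using assms by (auto simp: witness_parent_small witness_sign_def doubleton_eq_iff)
next
  case False
  then have "witness_parent n v \<noteq> 0" using witness_parent_eq_0_iff[of v n x] assms by simp
  with False show ?thesis by (auto simp: witness_sign_def doubleton_eq_iff)
qed

lemma witness_sdeg_eq:
  "sdeg (witness_edges n x) (witness_sign n) w =
     int (card {v \<in> witness_vertices n x - {0}. (v = w \<or> witness_parent n v = w) \<and> n < v})
   - int (card {v \<in> witness_vertices n x - {0}. (v = w \<or> witness_parent n v = w) \<and> v \<le> n})"
  unfolding witness_edges_def parent_tree.sdeg_eq[OF witness_parent_tree]
  using witness_sign_parent_edge
  by (intro arg_cong2[where f = "(-)"] arg_cong[where f = "\<lambda>A. int (card A)"]) auto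

lemma witness_sdeg_leaf:
  assumes "w \<in> witness_vertices n x" "n < w"
  shows "sdeg (witness_edges n x) (witness_sign n) w = 1"
proof -
  have "{v \<in> witness_vertices n x - {0}. (v = w \<or> witness_parent n v = w) \<and> n < v} = {w}"
    "{v \<in> witness_vertices n x - {0}. (v = w \<or> witness_parent n v = w) \<and> v \<le> n} = {}"
    using assms witness_parent_le by fastforce+
  then show ?thesis unfolding witness_sdeg_eq by simp
qed

lemma witness_sdeg_root: "sdeg (witness_edges n x) (witness_sign n) 0 = 0"
proof -
  have children:
    "{v \<in> witness_vertices n x - {0}. (v = 0 \<or> witness_parent n v = 0) \<and> P v} = {v \<in> {1..2 * n}. P v}"
    for P
  proof (intro equalityI subsetI)
    fix v assume "v \<in> {v \<in> witness_vertices n x - {0}. (v = 0 \<or> witness_parent n v = 0) \<and> P v}"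
    then show "v \<in> {v \<in> {1..2 * n}. P v}" using witness_parent_eq_0_iff[of v n x] by auto
  next
    fix v assume "v \<in> {v \<in> {1..2 * n}. P v}"
    then show "v \<in> {v \<in> witness_vertices n x - {0}. (v = 0 \<or> witness_parent n v = 0) \<and> P v}"
      by (auto simp: witness_vertices_def witness_parent_small)
  qed
  have "{v \<in> witness_vertices n x - {0}. (v = 0 \<or> witness_parent n v = 0) \<and> n < v} = {n + 1..2 * n}"
    "{v \<in> witness_vertices n x - {0}. (v = 0 \<or> witness_parent n v = 0) \<and> v \<le> n} = {1..n}"
    unfolding children by auto
  then show ?thesis unfolding witness_sdeg_eq by simp
qed

lemma witness_sdeg_middle:
  assumes "i \<in> {1..n}" "0 \<le> x i"
  shows "sdeg (witness_edges n x) (witness_sign n) i = x i"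
proof -
  have "{v \<in> witness_vertices n x - {0}. (v = i \<or> witness_parent n v = i) \<and> n < v}
      = witness_leaf n i ` {..nat (x i)}"
  proof (intro equalityI subsetI)
    fix v assume v: "v \<in> {v \<in> witness_vertices n x - {0}. (v = i \<or> witness_parent n v = i) \<and> n < v}"
    then have parent: "witness_parent n v = i" and member: "v \<in> witness_vertices n x"
      using assms(1) by auto
    from member show "v \<in> witness_leaf n i ` {..nat (x i)}"
    proof (cases rule: witness_vertices_cases)
      case 1
      then show ?thesis using parent assms(1) by (simp add: witness_parent_small)
    next
      case (2 i' j)
      then show ?thesis using parent by auto
    qed
  next
    fix v assume "v \<in> witness_leaf n i ` {..nat (x i)}"
    then obtain j where j: "j \<le> nat (x i)" "v = witness_leaf n i j" by blast
    then have "v \<in> witness_vertices n x" using assms(1) unfolding witness_vertices_def by blast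
    moreover have "n < v" using witness_leaf_not_le[of n i j] j(2) by linarith
    ultimately show "v \<in> {v \<in> witness_vertices n x - {0}. (v = i \<or> witness_parent n v = i) \<and> n < v}"
      using j(2) by simp
  qed
  moreover have "inj (witness_leaf n i)" by (simp add: inj_def witness_leaf_def)
  moreover have "i \<in> witness_vertices n x" using assms(1) by (simp add: witness_vertices_def)
  then have "{v \<in> witness_vertices n x - {0}. (v = i \<or> witness_parent n v = i) \<and> v \<le> n} = {i}"
    using assms(1) by (auto simp: witness_parent_small)
  ultimately show ?thesis
    unfolding witness_sdeg_eq using assms(2) by (simp add: card_image inj_on_subset)
qed

lemma witness_realizes:
  assumes "1 \<le> n" "\<forall>i\<in>{1..n}. 0 \<le> x i"
  shows "realizes (witness_vertices n x) (witness_edges n x) (witness_sign n) ({1, 0} \<union> x ` {1..n})"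
  unfolding realizes_def
proof (intro equalityI subsetI)
  fix d assume "d \<in> {1, 0} \<union> x ` {1..n}"
  then consider "d = 1" | "d = 0" | i where "i \<in> {1..n}" "d = x i" by blast
  then show "d \<in> sdeg (witness_edges n x) (witness_sign n) ` witness_vertices n x"
  proof cases
    case 1
    have "n + 1 \<in> witness_vertices n x" using assms(1) by (simp add: witness_vertices_def)
    then show ?thesis using witness_sdeg_leaf[of "n + 1"] 1 by (metis image_eqI less_add_one)
  next
    case 2
    have "0 \<in> witness_vertices n x" by (simp add: witness_vertices_def)
    then show ?thesis using witness_sdeg_root 2 by (metis image_eqI)
  next
    case (3 i)
    then have "i \<in> witness_vertices n x" by (simp add: witness_vertices_def)
    then show ?thesis using witness_sdeg_middle[OF 3(1)] assms(2) 3 by (metis image_eqI)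
  qed
next
  fix d assume "d \<in> sdeg (witness_edges n x) (witness_sign n) ` witness_vertices n x"
  then obtain v where v: "v \<in> witness_vertices n x" "d = sdeg (witness_edges n x) (witness_sign n) v"
    by blast
  consider "v = 0" | "v \<in> {1..n}" | "n < v" by fastforce
  then show "d \<in> {1, 0} \<union> x ` {1..n}"
  proof cases
    case 1
    then show ?thesis using v(2) witness_sdeg_root by simp
  next
    case 2
    then show ?thesis using v(2) witness_sdeg_middle[OF 2] assms(2) by simp
  next
    case 3
    then show ?thesis using v witness_sdeg_leaf by simp
  qed
qed

lemma witness_parent_edge:
  "v \<in> witness_vertices n x \<Longrightarrow> v \<noteq> 0 \<Longrightarrow> {v, witness_parent n v} \<in> witness_edges n x"
  unfolding witness_edges_def by (simp add: parent_tree.parent_edge[OF witness_parent_tree])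

lemma witness_gdist_parent:
  assumes "v \<in> witness_vertices n x"
  shows "gdist (witness_vertices n x) (witness_edges n x) v (witness_parent n v) \<le> 1"
proof (cases "v = 0")
  case True
  then show ?thesis using assms by (simp add: witness_parent_small gdist_self)
next
  case False
  then show ?thesis
    using gdist_edge[OF is_treeD(1)[OF witness_is_tree] witness_parent_edge[OF assms]] by simp
qed

lemma witness_gdist_root:
  assumes v: "v \<in> witness_vertices n x"
  shows "gdist (witness_vertices n x) (witness_edges n x) v 0 \<le> 2"
proof -
  let ?d = "gdist (witness_vertices n x) (witness_edges n x)" and ?p = "witness_parent n"
  have p: "?p v \<in> witness_vertices n x"
  proof (cases "v = 0")
    case True
    then show ?thesis using v by (simp add: witness_parent_small)
  qed (use parent_tree.parent_in[OF witness_parent_tree] v in blast)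
  have "?p (?p v) = 0" using witness_parent_le[OF v] by (simp add: witness_parent_small)
  have "?d v 0 \<le> ?d v (?p v) + ?d (?p v) 0"
    using gdist_triangle[OF is_treeD(2)[OF witness_is_tree] v p] by (simp add: witness_vertices_def)
  also have "\<dots> \<le> 2" using witness_gdist_parent[OF v] witness_gdist_parent[OF p] \<open>?p (?p v) = 0\<close> by simp
  finally show ?thesis .
qed

lemma witness_tree_diam_le_4: "tree_diam (witness_vertices n x) (witness_edges n x) \<le> 4"
proof (rule tree_diam_le)
  let ?V = "witness_vertices n x" and ?d = "gdist (witness_vertices n x) (witness_edges n x)"
  note connected = is_treeD(2)[OF witness_is_tree]
  show "finite ?V" by (rule is_treeD(4)[OF witness_is_tree])
  have root: "0 \<in> ?V" by (simp add: witness_vertices_def)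
  then show "?V \<noteq> {}" by blast
  fix u v assume uv: "u \<in> ?V" "v \<in> ?V"
  have "?d u v \<le> ?d u 0 + ?d 0 v" by (rule gdist_triangle[OF connected uv(1) root uv(2)])
  also have "\<dots> \<le> 4"
    using witness_gdist_root[OF uv(1)] witness_gdist_root[OF uv(2)] gdist_commute[OF connected root uv(2)]
    by simp
  finally show "?d u v \<le> 4" .
qed

lemma witness_tree_diam_le_3: "tree_diam (witness_vertices 1 x) (witness_edges 1 x) \<le> 3"
proof (rule tree_diam_le)
  let ?V = "witness_vertices 1 x" and ?d = "gdist (witness_vertices 1 x) (witness_edges 1 x)"
  note connected = is_treeD(2)[OF witness_is_tree]
  show "finite ?V" by (rule is_treeD(4)[OF witness_is_tree])
  have centre: "{0, 1} \<subseteq> ?V" by (simp add: witness_vertices_def)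
  then show "?V \<noteq> {}" by blast
  have centre_close: "?d c c' \<le> 1" if "c \<in> {0, 1}" "c' \<in> {0, 1}" for c c'
  proof -
    have "{1, 0} \<in> witness_edges 1 x"
      using witness_parent_edge[of 1 1 x] centre by (simp add: witness_parent_small)
    then show ?thesis using that centre gdist_edge[OF is_treeD(1)[OF witness_is_tree]]
      by (auto simp: gdist_self insert_commute)
  qed
  have near_centre: "\<exists>c \<in> {0, 1}. ?d v c \<le> 1 \<and> ?d c v \<le> 1" if v: "v \<in> ?V" for v
  proof (cases "v \<le> 1")
    case True
    then show ?thesis using v by (intro bexI[of _ v]) (auto simp: gdist_self)
  next
    case False
    have "witness_parent 1 v \<in> {0, 1}" using witness_parent_le[OF v] by auto
    moreover have "?d v (witness_parent 1 v) \<le> 1" by (rule witness_gdist_parent[OF v])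
    ultimately show ?thesis using gdist_commute[OF connected v] centre by auto
  qed
  fix u v assume uv: "u \<in> ?V" "v \<in> ?V"
  obtain c c' where c: "c \<in> {0, 1}" "?d u c \<le> 1" and c': "c' \<in> {0, 1}" "?d c' v \<le> 1"
    using near_centre uv by blast
  have "?d u v \<le> ?d u c + ?d c v"
    using gdist_triangle[OF connected uv(1) _ uv(2)] c centre by blast
  also have "\<dots> \<le> ?d u c + (?d c c' + ?d c' v)"
    using gdist_triangle[OF connected _ _ uv(2)] c c' centre by (meson add_left_mono subsetD)
  also have "\<dots> \<le> 3" using c c' centre_close[OF c(1) c'(1)] by simp
  finally show "?d u v \<le> 3" .
qed

lemma realizing_tree_diam_lower_bound:
  fixes x :: "nat \<Rightarrow> int"
  assumes tree: "is_tree V E" and realizes: "realizes V E s ({1, 0} \<union> x ` {1..n})"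
    and "1 \<le> n" "inj_on x {1..n}" "\<forall>i\<in>{1..n}. 1 < x i"
  shows "(if n = 1 then 3 else 4) \<le> tree_diam V E"
proof -
  note graph = is_treeD(1)[OF tree]
  have degrees: "{1, 0} \<union> x ` {1..n} = sdeg E s ` V" using realizes unfolding realizes_def .
  have one: "1 \<in> {1..n}" using assms(3) by simp
  obtain a where a: "a \<in> V" "sdeg E s a = 0" using degrees by (metis UnI1 imageE insertCI)
  obtain b where b: "b \<in> V" "sdeg E s b = x 1" using degrees one by (metis UnI2 imageE imageI)
  have "1 < x 1" using assms(5) one by blast
  then have "a \<noteq> b" and branch_b: "two_neighbours E b"
    using a b two_neighbours_if_sdeg_ge_2[OF graph, of s b] by auto
  have branch_a: "two_neighbours E a"
    using two_neighbours_if_sdeg_0[OF graph is_treeD(2)[OF tree] a(1) b(1)] \<open>a \<noteq> b\<close> a(2) by metis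
  show ?thesis
  proof (cases "n = 1")
    case True
    then show ?thesis using three_le_tree_diam[OF tree a(1) b(1) \<open>a \<noteq> b\<close> branch_a branch_b] by simp
  next
    case False
    then have two: "2 \<in> {1..n}" using assms(3) by simp
    obtain c where c: "c \<in> V" "sdeg E s c = x 2" using degrees two by (metis UnI2 imageE imageI)
    have "1 < x 2" "x 2 \<noteq> x 1" using assms(4,5) one two by (auto dest: inj_onD)
    then have "a \<noteq> c" "b \<noteq> c" and branch_c: "two_neighbours E c"
      using a b c two_neighbours_if_sdeg_ge_2[OF graph, of s c] by auto
    then show ?thesis
      using four_le_tree_diam[OF tree a(1) b(1) c(1) \<open>a \<noteq> b\<close> _ _ branch_a branch_b] False by simp
  qed
qed

theorem mainTheorem3:
  fixes n :: nat and x :: "nat \<Rightarrow> int"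
  assumes "n \<ge> 1"
    and "inj_on x {1..n}"
    and "\<forall>i\<in>{1..n}. x i > 1"
  shows "diam_set ({1, 0} \<union> x ` {1..n}) = (if n = 1 then 3 else 4)"
  unfolding diam_set_def
proof (rule Least_equality)
  let ?D = "{1, 0} \<union> x ` {1..n}"
  have lower: "(if n = 1 then 3 else 4) \<le> tree_diam V E" if "is_tree V E" "realizes V E s ?D" for V E s
    using realizing_tree_diam_lower_bound[OF that assms] .
  have realizes: "realizes (witness_vertices n x) (witness_edges n x) (witness_sign n) ?D"
    by (intro witness_realizes) (use assms in auto)
  have "tree_diam (witness_vertices n x) (witness_edges n x) = (if n = 1 then 3 else 4)"
    using lower[OF witness_is_tree realizes] witness_tree_diam_le_3[of x] witness_tree_diam_le_4[of n x]
    by (cases "n = 1") simp_all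
  then show "\<exists>V E s. is_tree V E \<and> realizes V E s ?D \<and> tree_diam V E = (if n = 1 then 3 else 4)"
    using witness_is_tree realizes by blast
  show "(if n = 1 then 3 else 4) \<le> d" if "\<exists>V E s. is_tree V E \<and> realizes V E s ?D \<and> tree_diam V E = d" for d
    using lower that by blast
qed

end
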